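(* Let $s$ and $A$ be fixed positive integers, and let $\beta$ be the maximal exponent in the prime factorization of $A$ (with $\beta=0$ if $A=1$). Let $x$ and $n$ be positive integers such that $x$ divides $A^n(n!)^s$. Then for every positive integer $a$, $$x\leq \bigl(a\,\omega(x)+1\bigr)^{n\omega(x)(\beta+s)}\,(An^s)^{n\left(\beta\omega(x)+\frac{s}{a}\right)}.$$ In particular, if $A=1$, then $x\leq (a\omega(x)+1)^{n\omega(x)s}(n^s)^{ns/a}$.
   Context: For a positive integer $x$, $\omega(x)$ denotes the number of distinct prime factors of $x$. *)

theory Defs
  imports "HOL-Analysis.Analysis" "HOL-Computational_Algebra.Primes"
begin

definition omega :: "nat \<Rightarrow> nat" where
  "omega x = card (prime_factors x)"

definition max_exp :: "nat \<Rightarrow> nat" where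
  "max_exp A = (if prime_factors A = {} then 0 else Max ((\<lambda>p. multiplicity p A) ` prime_factors A))"

end

theory Submission
  imports Defs
begin

(* For a prime p dividing x we have v_p(x) <= n v_p(A) + s v_p(n!), and Legendre's bound
   (p - 1) v_p(n!) <= n shows p^v_p(n!) <= (m + 1)^n if p <= m + 1, while p^v_p(n!) <= n^(n/m)
   if p > m + 1 (such a p divides n!, so p <= n).  With m = a omega(x), multiplying over the
   omega(x) prime factors of x gives x <= A^(n omega(x)) (a omega(x) + 1)^(n s omega(x)) n^(n s/a),
   which is stronger than both claimed bounds. *)

lemma multiplicity_fact_Suc:
  fixes p k :: nat
  assumes "prime_elem p"
  shows "multiplicity p (fact (Suc k) :: nat) = multiplicity p (Suc k) + multiplicity p (fact k :: nat)"
proof -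
  have "(fact (Suc k) :: nat) = Suc k * fact k" by simp
  then show ?thesis by (simp only:) (intro prime_elem_multiplicity_mult_distrib assms; simp)
qed

lemma multiplicity_fact_rec:
  fixes p n :: nat
  assumes "prime p"
  shows "multiplicity p (fact n :: nat) = n div p + multiplicity p (fact (n div p) :: nat)"
proof (induction n)
  case 0
  then show ?case by simp
next
  case (Suc n)
  have "p > 1" and fact_Suc: "multiplicity p (fact (Suc k) :: nat)
      = multiplicity p (Suc k) + multiplicity p (fact k :: nat)" for k
    using assms prime_gt_1_nat multiplicity_fact_Suc by auto
  show ?case
  proof (cases "p dvd Suc n")
    case True
    then obtain m where m: "Suc n = p * m" by blast
    then obtain j where j: "m = Suc j" by (cases m) auto
    have "n div p = j"
      by (rule div_nat_eqI) (use m j \<open>p > 1\<close> in simp_all)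
    have "multiplicity p (Suc n) = Suc (multiplicity p (Suc j))"
      unfolding m j using \<open>p > 1\<close> by (intro multiplicity_times_same) auto
    then have "multiplicity p (fact (Suc n) :: nat)
        = Suc (multiplicity p (Suc j)) + (j + multiplicity p (fact j :: nat))"
      using fact_Suc[of n] Suc.IH \<open>n div p = j\<close> by simp
    also have "\<dots> = Suc j + multiplicity p (fact (Suc j) :: nat)"
      using fact_Suc[of j] by simp
    also have "Suc j = Suc n div p"
      using m j \<open>p > 1\<close> by simp
    finally show ?thesis .
  next
    case False
    then have "Suc n div p = n div p"
      by (simp add: div_Suc dvd_eq_mod_eq_0)
    moreover have "multiplicity p (Suc n) = 0"
      using False by (simp add: not_dvd_imp_multiplicity_0)
    ultimately show ?thesis
      using fact_Suc[of n] Suc.IH by simp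
  qed
qed

lemma multiplicity_fact_le:
  fixes p n :: nat
  assumes "prime p"
  shows "(p - 1) * multiplicity p (fact n :: nat) \<le> n"
proof (induction n rule: less_induct)
  case (less n)
  show ?case
  proof (cases "n = 0")
    case True
    then show ?thesis by simp
  next
    case False
    have "p > 1" using assms prime_gt_1_nat by blast
    with False have "(p - 1) * multiplicity p (fact (n div p) :: nat) \<le> n div p"
      by (intro less) simp
    then have "(p - 1) * multiplicity p (fact n :: nat) \<le> (p - 1) * (n div p) + n div p"
      using multiplicity_fact_rec[OF assms, of n] by (simp add: algebra_simps)
    also have "\<dots> = p * (n div p)"
      using \<open>p > 1\<close> by (simp add: algebra_simps)
    also have "\<dots> \<le> n"
      by simp
    finally show ?thesis .
  qed
qed

lemma prime_power_multiplicity_fact_le: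
  fixes p n m :: nat
  assumes p: "prime p" and "m > 0"
  shows "real (p ^ multiplicity p (fact n :: nat)) \<le> max (real (m + 1) ^ n) (real n powr (real n / real m))"
proof -
  define v where "v = multiplicity p (fact n :: nat)"
  have "p > 1" using p prime_gt_1_nat by blast
  have v_le: "(p - 1) * v \<le> n" unfolding v_def using multiplicity_fact_le[OF p] .
  consider "p \<le> m + 1" | "v = 0" | "m + 1 < p" "v > 0" by linarith
  then show ?thesis
  proof cases
    case 1
    have "v \<le> (p - 1) * v" using \<open>p > 1\<close> by (simp add: Suc_leI)
    with v_le have "v \<le> n" by linarith
    have "real (p ^ v) \<le> real (m + 1) ^ v" using 1 by (simp add: power_mono)
    also have "\<dots> \<le> real (m + 1) ^ n" using \<open>v \<le> n\<close> by (intro power_increasing) auto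
    finally show ?thesis by (simp add: v_def)
  next
    case 2
    then show ?thesis by (simp add: v_def le_max_iff_disj)
  next
    case 3
    then have "p dvd fact n" unfolding v_def by (metis not_dvd_imp_multiplicity_0 less_irrefl)
    then have "p \<le> n" using p prime_dvd_fact_iff by blast
    have "m * v \<le> (p - 1) * v" using 3 by (intro mult_le_mono1) linarith
    with v_le have "m * v \<le> n" by linarith
    then have "real v \<le> real n / real m"
      using \<open>m > 0\<close> by (simp add: field_simps flip: of_nat_mult)
    have "real (p ^ v) \<le> real n ^ v" using \<open>p \<le> n\<close> by (simp add: power_mono)
    also have "\<dots> = real n powr real v" using \<open>p \<le> n\<close> \<open>p > 1\<close> by (simp add: powr_realpow)
    also have "\<dots> \<le> real n powr (real n / real m)"
      using \<open>real v \<le> real n / real m\<close> \<open>p \<le> n\<close> \<open>p > 1\<close> by (intro powr_mono) auto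
    finally show ?thesis by (simp add: v_def)
  qed
qed

lemma prime_power_multiplicity_le_if_dvd_power_fact:
  fixes p A n s m x :: nat
  assumes p: "prime p" and "A > 0" "n > 0" "m > 0" and dvd: "x dvd A ^ n * fact n ^ s"
  shows "real (p ^ multiplicity p x)
           \<le> real A ^ n * (real (m + 1) ^ n * real n powr (real n / real m)) ^ s"
proof -
  have "multiplicity p x \<le> multiplicity p (A ^ n * fact n ^ s)"
    using dvd \<open>A > 0\<close> by (intro dvd_imp_multiplicity_le) auto
  also have "\<dots> = n * multiplicity p A + s * multiplicity p (fact n :: nat)"
    using p \<open>A > 0\<close>
    by (simp add: prime_elem_multiplicity_mult_distrib prime_elem_multiplicity_power_distrib)
  finally have "p ^ multiplicity p x \<le> p ^ (n * multiplicity p A + s * multiplicity p (fact n :: nat))"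
    using prime_gt_0_nat[OF p] by (intro power_increasing) auto
  also have "\<dots> = (p ^ multiplicity p A) ^ n * (p ^ multiplicity p (fact n :: nat)) ^ s"
    by (simp add: power_add mult.commute flip: power_mult)
  finally have "real (p ^ multiplicity p x)
               \<le> real (p ^ multiplicity p A) ^ n * real (p ^ multiplicity p (fact n :: nat)) ^ s"
    by (simp flip: of_nat_power of_nat_mult)
  also have "\<dots> \<le> real A ^ n * (real (m + 1) ^ n * real n powr (real n / real m)) ^ s"
  proof (intro mult_mono power_mono)
    show "real (p ^ multiplicity p A) \<le> real A"
      using \<open>A > 0\<close> multiplicity_dvd[of p A] by (simp add: dvd_imp_le)
    have "1 \<le> real n powr (real n / real m)"
      using \<open>n > 0\<close> by (intro ge_one_powr_ge_zero) auto
    then have "max (real (m + 1) ^ n) (real n powr (real n / real m))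
                 \<le> real (m + 1) ^ n * real n powr (real n / real m)"
      by (simp add: mult_le_cancel_left1 mult_le_cancel_right1)
    with prime_power_multiplicity_fact_le[OF p \<open>m > 0\<close>]
    show "real (p ^ multiplicity p (fact n :: nat)) \<le> real (m + 1) ^ n * real n powr (real n / real m)"
      by (rule order_trans)
  qed auto
  finally show ?thesis .
qed

lemma of_nat_le_power_omega:
  fixes x :: nat and B :: real
  assumes "x > 0" and "\<And>p. p \<in> prime_factors x \<Longrightarrow> real (p ^ multiplicity p x) \<le> B"
  shows "real x \<le> B ^ omega x"
proof -
  have "real x = (\<Prod>p\<in>prime_factors x. real (p ^ multiplicity p x))"
    using prime_factorization_nat[OF \<open>x > 0\<close>] by (metis of_nat_prod)
  also have "\<dots> \<le> (\<Prod>p\<in>prime_factors x. B)"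
    using assms(2) by (intro prod_mono) auto
  finally show ?thesis
    by (simp add: omega_def)
qed

lemma le_if_dvd_power_fact:
  fixes A n s a x :: nat
  assumes "A > 0" "n > 0" "a > 0" "x > 0" and dvd: "x dvd A ^ n * fact n ^ s"
  shows "real x \<le> real A ^ (n * omega x) * (real a * real (omega x) + 1) ^ (n * s * omega x)
                     * real n powr (real n * real s / real a)"
proof (cases "omega x = 0")
  case True
  then have "x = 1"
    using prime_factorization_nat[OF \<open>x > 0\<close>] by (simp add: omega_def)
  moreover have "1 \<le> real n powr (real n * real s / real a)"
    using \<open>n > 0\<close> by (intro ge_one_powr_ge_zero) auto
  ultimately show ?thesis
    using True by simp
next
  case False
  define k where "k = omega x"
  have "k > 0" "a * k > 0" using False \<open>a > 0\<close> by (simp_all add: k_def)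
  have "real x \<le> (real A ^ n * (real (a * k + 1) ^ n * real n powr (real n / real (a * k))) ^ s) ^ k"
    unfolding k_def
    by (intro of_nat_le_power_omega prime_power_multiplicity_le_if_dvd_power_fact \<open>x > 0\<close> \<open>A > 0\<close> \<open>n > 0\<close> dvd)
       (use \<open>a * k > 0\<close> k_def in auto)
  also have "(real n powr (real n / real (a * k))) ^ (s * k) = real n powr (real n * real s / real a)"
    using \<open>n > 0\<close> \<open>k > 0\<close> by (simp add: powr_power field_simps)
  ultimately show ?thesis
    unfolding k_def[symmetric]
    by (simp add: power_mult_distrib add.commute mult.commute mult.left_commute flip: power_mult)
qed

lemma power_le_powr:
  fixes y e :: real
  assumes "1 \<le> y" "real k \<le> e"
  shows "y ^ k \<le> y powr e"
  using assms powr_mono[of "real k" e y] by (simp add: powr_realpow)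

lemma powr_le_power_powr:
  fixes y c e :: real
  assumes "1 \<le> y" "s > 0" "c \<le> e" "0 \<le> e"
  shows "y powr c \<le> (y ^ s) powr e"
proof -
  have "y powr c \<le> y powr (real s * e)"
    using assms mult_right_mono[of 1 "real s" e] by (intro powr_mono) auto
  also have "\<dots> = (y ^ s) powr e"
    using assms by (simp add: powr_realpow [symmetric] powr_powr)
  finally show ?thesis .
qed

lemma one_le_max_exp:
  assumes "A > 1"
  shows "1 \<le> max_exp A"
proof -
  obtain p where "prime p" "p dvd A"
    using assms prime_factor_nat[of A] by auto
  then have "p \<in> prime_factors A" "1 \<le> multiplicity p A"
    using assms by (auto simp: prime_factors_dvd prime_multiplicity_gt_zero_iff Suc_le_eq)
  then show ?thesis
    unfolding max_exp_def by (auto intro: le_trans[OF _ Max_ge])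
qed

lemma power_le_powr_max_exp:
  fixes A n k :: nat and c :: real
  assumes "A > 0" "c \<ge> 0"
  shows "real A ^ (n * k) \<le> real A powr (real n * (real (max_exp A) * real k + c))"
proof (cases "A = 1")
  case False
  with assms have "1 \<le> max_exp A"
    by (intro one_le_max_exp) simp
  then have "real k \<le> real (max_exp A) * real k + c"
    using assms mult_right_mono[of 1 "real (max_exp A)" "real k"] by (simp add: add_increasing2)
  then have "real (n * k) \<le> real n * (real (max_exp A) * real k + c)"
    by (simp add: mult_left_mono)
  with assms show ?thesis
    by (intro power_le_powr) auto
qed simp

theorem lemma2p2:
  fixes s A x n a :: nat
  assumes "s > 0" "A > 0" "x > 0" "n > 0" "a > 0"
    and "x dvd A ^ n * (fact n) ^ s"
  shows "real x \<le> (real a * real (omega x) + 1) powr (real n * real (omega x) * real (max_exp A + s))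
            * (real A * real n ^ s) powr (real n * (real (max_exp A) * real (omega x) + real s / real a))
     \<and> (A = 1 \<longrightarrow> real x \<le> (real a * real (omega x) + 1) powr (real n * real (omega x) * real s)
            * (real n ^ s) powr (real n * real s / real a))"
proof -
  define k where "k = omega x"
  define X c E where "X = real a * real k + 1" and "c = real n * real s / real a"
    and "E = real n * (real (max_exp A) * real k + real s / real a)"
  have "X \<ge> 1" "real n \<ge> 1" "c \<ge> 0"
    using assms by (simp_all add: X_def c_def)
  have "c \<le> E"
    unfolding c_def E_def times_divide_eq_right [symmetric] by (intro mult_left_mono) auto
  with \<open>c \<ge> 0\<close> have "E \<ge> 0"
    by linarith
  have bound: "real x \<le> real A ^ (n * k) * X ^ (n * s * k) * real n powr c"
    unfolding k_def X_def c_def using le_if_dvd_power_fact assms by blast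
  have A_le: "real A ^ (n * k) \<le> real A powr E"
    unfolding E_def using assms by (intro power_le_powr_max_exp) auto
  have X_le: "X ^ (n * s * k) \<le> X powr (real n * real k * real (max_exp A + s))"
    using \<open>X \<ge> 1\<close> by (intro power_le_powr) (simp_all add: mult_ac mult_left_mono)
  note bound
  also have "real A ^ (n * k) * X ^ (n * s * k) * real n powr c
               \<le> real A powr E * X powr (real n * real k * real (max_exp A + s)) * (real n ^ s) powr E"
    using A_le X_le powr_le_power_powr[OF \<open>real n \<ge> 1\<close> \<open>s > 0\<close> \<open>c \<le> E\<close> \<open>E \<ge> 0\<close>] \<open>X \<ge> 1\<close>
    by (intro mult_mono) simp_all
  also have "\<dots> = X powr (real n * real k * real (max_exp A + s)) * (real A * real n ^ s) powr E"
    by (simp add: powr_mult)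
  finally have "real x \<le> X powr (real n * real k * real (max_exp A + s)) * (real A * real n ^ s) powr E" .
  moreover have "real x \<le> X powr (real n * real k * real s) * (real n ^ s) powr c" if "A = 1"
  proof -
    have "X ^ (n * s * k) = X powr (real n * real k * real s)"
      using \<open>X \<ge> 1\<close> by (simp add: powr_realpow [symmetric] mult_ac)
    with bound that have "real x \<le> X powr (real n * real k * real s) * real n powr c"
      by simp
    also have "\<dots> \<le> X powr (real n * real k * real s) * (real n ^ s) powr c"
      using \<open>real n \<ge> 1\<close> \<open>s > 0\<close> \<open>c \<ge> 0\<close> by (intro mult_left_mono powr_le_power_powr) simp_all
    finally show ?thesis .
  qed
  ultimately show ?thesis
    unfolding X_def c_def E_def k_def by blast
qed

end
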